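(* For every $n\ge1$, the number of layers on $n$ channels that are in last layer normal form is $P_{n+5}$, where $(P_m)$ is the Padovan sequence defined by $P_0=1$, $P_1=P_2=0$ and $P_{m+3}=P_m+P_{m+1}$.
   Context: Channels are numbered $1,\ldots,n$. A layer on $n$ channels is a set of comparators $(i,j)$ with $1\le i<j\le n$ such that each channel occurs in at most one comparator of the layer. A channel is used in a layer if it occurs in some comparator of that layer. A layer is in last layer normal form if (i) every comparator in it is of the form $(i,i+1)$, and (ii) there is no $i$ with $1\le i<n$ such that both channels $i$ and $i+1$ are unused in the layer. *)

theory Defs
  imports Main
begin

definition is_layer :: "nat \<Rightarrow> (nat \<times> nat) set \<Rightarrow> bool" where
  "is_layer n L \<longleftrightarrow>
     (\<forall>(i, j) \<in> L. 1 \<le> i \<and> i < j \<and> j \<le> n) \<and>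
     (\<forall>c\<in>L. \<forall>d\<in>L. c \<noteq> d \<longrightarrow> {fst c, snd c} \<inter> {fst d, snd d} = {})"

definition used :: "(nat \<times> nat) set \<Rightarrow> nat \<Rightarrow> bool" where
  "used L k \<longleftrightarrow> (\<exists>(i, j) \<in> L. k = i \<or> k = j)"

definition last_layer_nf :: "nat \<Rightarrow> (nat \<times> nat) set \<Rightarrow> bool" where
  "last_layer_nf n L \<longleftrightarrow>
     (\<forall>(i, j) \<in> L. j = i + 1) \<and>
     \<not> (\<exists>i. 1 \<le> i \<and> i < n \<and> \<not> used L i \<and> \<not> used L (i + 1))"

fun padovan :: "nat \<Rightarrow> nat" where
  "padovan 0 = 1"
| "padovan (Suc 0) = 0"
| "padovan (Suc (Suc 0)) = 0"
| "padovan (Suc (Suc (Suc m))) = padovan m + padovan (Suc m)"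

end

theory Submission
  imports Defs
begin

text \<open>A layer in last layer normal form on \<open>n + 3\<close> channels either contains the comparator
  \<open>(n + 2, n + 3)\<close>, or leaves channel \<open>n + 3\<close> unused and then must contain \<open>(n + 1, n + 2)\<close>.
  Removing that comparator leaves a normal-form layer on \<open>n + 1\<close> resp. \<open>n\<close> channels, and
  conversely, so the counts satisfy the Padovan recurrence \<open>c (n + 3) = c (n + 1) + c n\<close>;
  the initial values \<open>c 0 = c 1 = c 2 = 1\<close> are \<open>P\<^sub>5 = P\<^sub>6 = P\<^sub>7\<close>.\<close>

definition nf_layers :: "nat \<Rightarrow> (nat \<times> nat) set set" where
  "nf_layers n = {L. is_layer n L \<and> last_layer_nf n L}"

lemma finite_nf_layers: "finite (nf_layers n)"
proof (rule finite_subset)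
  show "nf_layers n \<subseteq> Pow ({1..n} \<times> {1..n})"
    by (auto simp: nf_layers_def is_layer_def)
qed auto

lemma comparator_in_nf_layer:
  assumes "L \<in> nf_layers n" "(i, j) \<in> L"
  shows "1 \<le> i \<and> j = i + 1 \<and> j \<le> n"
  using assms unfolding nf_layers_def is_layer_def last_layer_nf_def by fastforce

lemma comparators_in_nf_layer_disjoint:
  assumes "L \<in> nf_layers n" "(i, j) \<in> L" "(i', j') \<in> L" "(i, j) \<noteq> (i', j')"
  shows "{i, j} \<inter> {i', j'} = {}"
  using assms unfolding nf_layers_def is_layer_def by fastforce

lemma nf_layer_adjacent_used:
  assumes "L \<in> nf_layers n" "1 \<le> i" "i < n"
  shows "used L i \<or> used L (i + 1)"
  using assms unfolding nf_layers_def last_layer_nf_def by blast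

lemma used_nf_layer_cases:
  assumes "L \<in> nf_layers n" "used L c"
  shows "(c - 1, c) \<in> L \<and> 2 \<le> c \<or> (c, c + 1) \<in> L"
proof -
  obtain i j where ij: "(i, j) \<in> L" "c = i \<or> c = j"
    using assms(2) by (auto simp: used_def)
  with comparator_in_nf_layer[OF assms(1) ij(1)] show ?thesis
    by auto
qed

lemma nf_layersI:
  assumes "\<And>i j. (i, j) \<in> L \<Longrightarrow> 1 \<le> i \<and> j = i + 1 \<and> j \<le> n"
    and "\<And>c d. c \<in> L \<Longrightarrow> d \<in> L \<Longrightarrow> c \<noteq> d \<Longrightarrow> {fst c, snd c} \<inter> {fst d, snd d} = {}"
    and "\<And>i. 1 \<le> i \<Longrightarrow> i < n \<Longrightarrow> used L i \<or> used L (i + 1)"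
  shows "L \<in> nf_layers n"
proof -
  have "\<forall>(i, j) \<in> L. 1 \<le> i \<and> i < j \<and> j \<le> n" "\<forall>(i, j) \<in> L. j = i + 1"
    using assms(1) by fastforce+
  with assms(2,3) show ?thesis
    unfolding nf_layers_def is_layer_def last_layer_nf_def by blast
qed

lemma nf_layers_0: "nf_layers 0 = {{}}"
  by (auto simp: nf_layers_def is_layer_def last_layer_nf_def used_def)

lemma nf_layers_1: "nf_layers 1 = {{}}"
  by (auto simp: nf_layers_def is_layer_def last_layer_nf_def used_def)

lemma nf_layers_2: "nf_layers 2 = {{(1, 2)}}"
proof (intro equalityI subsetI)
  fix L assume L: "L \<in> nf_layers 2"
  have "(i, j) = (1, 2)" if "(i, j) \<in> L" for i j
    using comparator_in_nf_layer[OF L that] by auto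
  then have "L \<subseteq> {(1, 2)}" by auto
  moreover have "L \<noteq> {}"
    using nf_layer_adjacent_used[OF L, of 1] by (auto simp: used_def)
  ultimately show "L \<in> {{(1, 2)}}" by blast
next
  have "{(1, 2)} \<in> nf_layers 2"
    by (rule nf_layersI) (auto simp: used_def)
  then show "L \<in> nf_layers 2" if "L \<in> {{(1, 2)}}" for L
    using that by simp
qed

lemma insert_nf_layers:
  assumes L: "L \<in> nf_layers k" and n: "k + 2 \<le> n" "n \<le> k + 3"
  shows "insert (k + 1, k + 2) L \<in> nf_layers n"
proof (rule nf_layersI)
  fix i j assume "(i, j) \<in> insert (k + 1, k + 2) L"
  then show "1 \<le> i \<and> j = i + 1 \<and> j \<le> n"
    using n by (auto dest: comparator_in_nf_layer[OF L])
next
  fix c d assume cd: "c \<in> insert (k + 1, k + 2) L" "d \<in> insert (k + 1, k + 2) L" "c \<noteq> d"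
  have fresh: "{fst e, snd e} \<inter> {k + 1, k + 2} = {}" if "e \<in> L" for e
    using comparator_in_nf_layer[OF L, of "fst e" "snd e"] that by auto
  from cd consider "c \<in> L" "d \<in> L" | "c = (k + 1, k + 2)" "d \<in> L" | "c \<in> L" "d = (k + 1, k + 2)"
    by blast
  then show "{fst c, snd c} \<inter> {fst d, snd d} = {}"
  proof cases
    case 1
    then show ?thesis
      using L \<open>c \<noteq> d\<close> by (auto simp: nf_layers_def is_layer_def)
  qed (use fresh in auto)
next
  fix i assume "1 \<le> i" "i < n"
  then consider "i < k" | "i = k" | "i = k + 1" | "i = k + 2"
    using n by linarith
  then show "used (insert (k + 1, k + 2) L) i \<or> used (insert (k + 1, k + 2) L) (i + 1)"
  proof cases
    case 1
    then show ?thesis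
      using nf_layer_adjacent_used[OF L \<open>1 \<le> i\<close>] by (auto simp: used_def)
  qed (auto simp: used_def)
qed

lemma remove_nf_layers:
  assumes L: "L \<in> nf_layers n" and last: "(k + 1, k + 2) \<in> L"
    and unused: "\<And>c. k + 2 < c \<Longrightarrow> \<not> used L c"
  shows "L - {(k + 1, k + 2)} \<in> nf_layers k"
proof (rule nf_layersI)
  fix i j assume ij: "(i, j) \<in> L - {(k + 1, k + 2)}"
  then have "{i, j} \<inter> {k + 1, k + 2} = {}"
    using comparators_in_nf_layer_disjoint[OF L _ last] by blast
  moreover have "\<not> k + 2 < j"
    using unused ij by (auto simp: used_def)
  ultimately show "1 \<le> i \<and> j = i + 1 \<and> j \<le> k"
    using comparator_in_nf_layer[OF L] ij by fastforce
next
  fix c d assume "c \<in> L - {(k + 1, k + 2)}" "d \<in> L - {(k + 1, k + 2)}" "c \<noteq> d"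
  then show "{fst c, snd c} \<inter> {fst d, snd d} = {}"
    using L by (auto simp: nf_layers_def is_layer_def)
next
  fix i assume i: "1 \<le> i" "i < k"
  have "n > k + 1"
    using comparator_in_nf_layer[OF L last] by simp
  then have "used L i \<or> used L (i + 1)"
    using nf_layer_adjacent_used[OF L] i by simp
  then show "used (L - {(k + 1, k + 2)}) i \<or> used (L - {(k + 1, k + 2)}) (i + 1)"
    using i by (auto simp: used_def)
qed

lemma nf_layers_unused_above:
  assumes "L \<in> nf_layers n" "n < c"
  shows "\<not> used L c"
  using assms comparator_in_nf_layer unfolding used_def by fastforce

lemma nf_layers_Suc3:
  "nf_layers (m + 3) = insert (m + 2, m + 3) ` nf_layers (m + 1) \<union> insert (m + 1, m + 2) ` nf_layers m"
proof (intro equalityI subsetI)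
  fix L assume L: "L \<in> nf_layers (m + 3)"
  show "L \<in> insert (m + 2, m + 3) ` nf_layers (m + 1) \<union> insert (m + 1, m + 2) ` nf_layers m"
  proof (cases "used L (m + 3)")
    case True
    then have last: "(m + 2, m + 3) \<in> L"
      using used_nf_layer_cases[OF L True] by (auto dest: comparator_in_nf_layer[OF L])
    have "L - {(m + 2, m + 3)} \<in> nf_layers (m + 1)"
      using remove_nf_layers[of L "m + 3" "m + 1"] L last nf_layers_unused_above[OF L]
      by (simp add: numeral_eq_Suc)
    moreover have "L = insert (m + 2, m + 3) (L - {(m + 2, m + 3)})"
      using last by blast
    ultimately show ?thesis by blast
  next
    case False
    then have "used L (m + 2)"
      using nf_layer_adjacent_used[OF L, of "m + 2"] by (simp add: numeral_eq_Suc)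
    moreover have "(m + 2, m + 3) \<notin> L"
      using False by (auto simp: used_def)
    ultimately have last: "(m + 1, m + 2) \<in> L"
      using used_nf_layer_cases[OF L] by (fastforce simp: numeral_eq_Suc)
    have "\<not> used L c" if "m + 2 < c" for c
      using False nf_layers_unused_above[OF L] that by (cases "c = m + 3") auto
    then have "L - {(m + 1, m + 2)} \<in> nf_layers m"
      using remove_nf_layers[OF L] last by simp
    moreover have "L = insert (m + 1, m + 2) (L - {(m + 1, m + 2)})"
      using last by blast
    ultimately show ?thesis by blast
  qed
next
  fix L assume "L \<in> insert (m + 2, m + 3) ` nf_layers (m + 1) \<union> insert (m + 1, m + 2) ` nf_layers m"
  then show "L \<in> nf_layers (m + 3)"
    using insert_nf_layers[of _ "m + 1" "m + 3"] insert_nf_layers[of _ m "m + 3"]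
    by (auto simp: numeral_eq_Suc)
qed

lemma inj_on_insert_fresh:
  assumes "\<And>B. B \<in> A \<Longrightarrow> x \<notin> B"
  shows "inj_on (insert x) A"
  using assms by (intro inj_onI) (metis insert_ident)

lemma card_nf_layers_Suc3:
  "card (nf_layers (m + 3)) = card (nf_layers (m + 1)) + card (nf_layers m)"
proof -
  have fresh: "x \<notin> L" if "L \<in> nf_layers k" "k < snd x" for L k x
    using comparator_in_nf_layer[OF that(1)] that(2) by (cases x) fastforce
  have "(m + 2, m + 3) \<notin> insert (m + 1, m + 2) L" if "L \<in> nf_layers m" for L
    using fresh[OF that, of "(m + 2, m + 3)"] by simp
  then have disjoint:
    "insert (m + 2, m + 3) ` nf_layers (m + 1) \<inter> insert (m + 1, m + 2) ` nf_layers m = {}"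
    by blast
  have "card (nf_layers (m + 3))
      = card (insert (m + 2, m + 3) ` nf_layers (m + 1)) + card (insert (m + 1, m + 2) ` nf_layers m)"
    unfolding nf_layers_Suc3 by (rule card_Un_disjoint[OF _ _ disjoint]) (simp_all add: finite_nf_layers)
  also have "\<dots> = card (nf_layers (m + 1)) + card (nf_layers m)"
    using fresh by (simp add: card_image inj_on_insert_fresh)
  finally show ?thesis .
qed

lemma card_nf_layers: "card (nf_layers n) = padovan (n + 5)"
proof (induction n rule: padovan.induct)
  case (4 m)
  then show ?case
    using card_nf_layers_Suc3[of m] by (simp add: numeral_eq_Suc)
qed (simp_all add: nf_layers_0 nf_layers_1[unfolded One_nat_def] nf_layers_2[unfolded numeral_2_eq_2]
    numeral_eq_Suc)

theorem theorem3:
  fixes n :: nat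
  assumes "n \<ge> 1"
  shows "card {L. is_layer n L \<and> last_layer_nf n L} = padovan (n + 5)"
  using card_nf_layers unfolding nf_layers_def .

end
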